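(* Let $C,C_1,C_2,C_3,C_4$ be circles with distinct centers $u,u_1,u_2,u_3,u_4$ such that, for each $i\in\{1,2,3,4\}$ (indices mod 4), the circles $C,C_i,C_{i+1}$ pass through a common point $P_i$, and let $\tilde P_i$ be the second intersection point of $C_i$ and $C_{i+1}$. Then $\tilde P_1,\dots,\tilde P_4$ lie on a circle $\tilde C$, and its center is the root $z=\tilde u$ different from $z=u$ of $$\frac{(u_2-z)(u_4-z)}{(u_1-z)(u_3-z)}=\frac{(u_2-u)(u_4-u)}{(u_1-u)(u_3-u)},$$ namely $$\tilde u=\frac{uu_1u_3-u_1u_2u_3-uu_2u_4+u_1u_2u_4-u_1u_3u_4+u_2u_3u_4}{uu_1-uu_2+uu_3-u_1u_3-uu_4+u_2u_4}.$$
   Context: All points are assumed in general position so that all the intersection points are distinct and the denominator is nonzero. *)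

theory Defs
  imports Complex_Main
begin

definition circle :: "complex \<Rightarrow> real \<Rightarrow> complex set" where
  "circle c r = {z. cmod (z - c) = r}"

end

theory Submission
  imports Defs
begin

text \<open>Translate so that \<open>C\<close> is the circle \<open>|z| = r\<close>. On \<open>C\<close> conjugation is \<open>cnj z = r\<^sup>2/z\<close>, so the
  center of a circle through two points \<open>p, q\<close> of \<open>C\<close> satisfies \<open>cnj v = r\<^sup>2 v/(p q)\<close>, and
  the second intersection \<open>Q\<close> of two circles is the reflection of the first one in the line of
  centers. Substituting these into \<open>|Q - \<tilde>u|\<^sup>2\<close> leaves an expression in the \<open>P\<^sub>i\<close> and \<open>u\<^sub>i\<close> which is
  invariant under the cyclic shift of indices, hence the same for all four points \<open>Q\<^sub>i\<close>.
  The two roots of the quadratic equation are read off from a factorisation.\<close>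

lemma cmod_eq_iff_mult_cnj: "cmod a = cmod b \<longleftrightarrow> a * cnj a = b * cnj b"
proof -
  have "cmod a = cmod b \<longleftrightarrow> (cmod a)\<^sup>2 = (cmod b)\<^sup>2"
    by (simp add: power2_eq_iff_nonneg)
  also have "\<dots> \<longleftrightarrow> complex_of_real ((cmod a)\<^sup>2) = complex_of_real ((cmod b)\<^sup>2)"
    by (simp only: of_real_eq_iff)
  finally show ?thesis by (simp only: complex_norm_square)
qed

lemma circle_translate: "z - u \<in> circle (c - u) r \<longleftrightarrow> z \<in> circle c r"
  by (simp add: circle_def)

lemma circle_translate_to_origin: "z - u \<in> circle 0 r \<longleftrightarrow> z \<in> circle u r"
  by (simp add: circle_def)

lemma cnj_on_centered_circle:
  assumes "p \<in> circle 0 r" "r > 0"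
  shows "p \<noteq> 0" "cnj p = of_real r ^ 2 / p"
proof -
  have norm: "cmod p = r" using assms(1) by (simp add: circle_def)
  then show "p \<noteq> 0" using assms(2) by auto
  have "p * cnj p = of_real ((cmod p)\<^sup>2)" by (rule complex_norm_square[symmetric])
  also have "\<dots> = of_real r ^ 2" by (simp add: norm)
  finally have "p * cnj p = of_real r ^ 2" .
  with \<open>p \<noteq> 0\<close> show "cnj p = of_real r ^ 2 / p" by (simp add: field_simps)
qed

lemma cnj_center_of_chord:
  fixes p q v R :: complex
  assumes "p \<noteq> 0" "q \<noteq> 0" "p \<noteq> q" "cnj p = R / p" "cnj q = R / q"
    and "cmod (p - v) = cmod (q - v)"
  shows "cnj v = R * v / (p * q)"
proof -
  have eq: "(p - v) * (R / p - cnj v) = (q - v) * (R / q - cnj v)"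
    using assms(4-6) by (simp add: cmod_eq_iff_mult_cnj)
  have "(q - p) * (cnj v * p * q - R * v) = p * q * ((p - v) * (R / p - cnj v) - (q - v) * (R / q - cnj v))"
    using assms(1,2) by (simp add: field_simps)
  with eq assms(3) have "cnj v * p * q = R * v" by simp
  with assms(1,2) show ?thesis by (simp add: field_simps)
qed

text \<open>The second intersection \<open>q\<close> of two circles through \<open>p\<close> is the reflection of \<open>p\<close> in the line
  of centers: subtracting the two circle equations shows that \<open>q - p\<close> is perpendicular to \<open>v\<^sub>1 - v\<^sub>2\<close>.\<close>

lemma second_intersection:
  fixes p q v1 v2 :: complex
  assumes "cmod (q - v1) = cmod (p - v1)" "cmod (q - v2) = cmod (p - v2)" "q \<noteq> p" "v1 \<noteq> v2"
  shows "q = v1 + (v1 - v2) * (cnj p - cnj v1) / (cnj v1 - cnj v2)"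
    and "cnj q = cnj p - (q - p) * (cnj v1 - cnj v2) / (v1 - v2)"
proof -
  have circ1: "(q - v1) * (cnj q - cnj v1) = (p - v1) * (cnj p - cnj v1)"
    and circ2: "(q - v2) * (cnj q - cnj v2) = (p - v2) * (cnj p - cnj v2)"
    using assms(1,2) by (simp_all add: cmod_eq_iff_mult_cnj)
  have dv: "v1 - v2 \<noteq> 0" and dcv: "cnj v1 - cnj v2 \<noteq> 0" using assms(4) by auto
  have "(q - p) * (cnj v1 - cnj v2) + (cnj q - cnj p) * (v1 - v2)
      = ((p - v1) * (cnj p - cnj v1) - (p - v2) * (cnj p - cnj v2))
        - ((q - v1) * (cnj q - cnj v1) - (q - v2) * (cnj q - cnj v2))"
    by (simp add: algebra_simps)
  also have "\<dots> = 0" by (simp add: circ1 circ2)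
  finally have "(q - p) * (cnj v1 - cnj v2) + (cnj q - cnj p) * (v1 - v2) = 0" .
  then show cnj_q: "cnj q = cnj p - (q - p) * (cnj v1 - cnj v2) / (v1 - v2)"
    using dv by (simp add: field_simps add_eq_0_iff)
  define w where "w = (cnj v1 - cnj v2) / (v1 - v2)"
  have cnj_q_w: "cnj q = cnj p - (q - p) * w" unfolding cnj_q w_def by simp
  have "(q - v1) * (cnj q - cnj v1) - (p - v1) * (cnj p - cnj v1)
      = (q - p) * (cnj p - cnj v1 - w * (q - v1))"
    unfolding cnj_q_w by (simp add: algebra_simps)
  with circ1 assms(3) have "cnj p - cnj v1 = w * (q - v1)" by simp
  then show "q = v1 + (v1 - v2) * (cnj p - cnj v1) / (cnj v1 - cnj v2)"
    using dv dcv unfolding w_def by (simp add: field_simps)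
qed

text \<open>\<open>miquel_center v\<^sub>1 v\<^sub>2 v\<^sub>3 v\<^sub>4\<close> is \<open>\<tilde>u\<close> for \<open>u = 0\<close>; \<open>miquel_radius_sq\<close> is the squared radius of
  \<open>\<tilde>C\<close> for \<open>u = 0\<close>, in terms of the points \<open>P\<^sub>i\<close> on \<open>C\<close> and \<open>R = r\<^sup>2\<close>.\<close>

definition miquel_center :: "complex \<Rightarrow> complex \<Rightarrow> complex \<Rightarrow> complex \<Rightarrow> complex" where
  "miquel_center v1 v2 v3 v4 =
     (- v1*v2*v3 + v1*v2*v4 - v1*v3*v4 + v2*v3*v4) / (v2*v4 - v1*v3)"

definition miquel_radius_sq ::
    "complex \<Rightarrow> complex \<Rightarrow> complex \<Rightarrow> complex \<Rightarrow> complex \<Rightarrow> complex \<Rightarrow> complex \<Rightarrow> complex \<Rightarrow> complex \<Rightarrow> complex"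
  where
  "miquel_radius_sq p1 p2 p3 p4 v1 v2 v3 v4 R =
     R * (p2*p4*(v2*v4 - v1*v3) + p4*v2*v3*(v1 - v4) - p2*v1*v4*(v2 - v3))
       * (p1*p3*(v2*v4 - v1*v3) + p3*v1*v2*(v3 - v4) + p1*v3*v4*(v1 - v2))
       / (p1*p2*p3*p4*(v2*v4 - v1*v3)\<^sup>2)"

lemma miquel_center_rotate: "miquel_center v2 v3 v4 v1 = miquel_center v1 v2 v3 v4"
proof -
  have "- v2*v3*v4 + v2*v3*v1 - v2*v4*v1 + v3*v4*v1 = - (- v1*v2*v3 + v1*v2*v4 - v1*v3*v4 + v2*v3*v4)"
    and "v3*v1 - v2*v4 = - (v2*v4 - v1*v3)"
    by (simp_all add: algebra_simps)
  then show ?thesis unfolding miquel_center_def by (metis minus_divide_divide)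
qed

lemma miquel_radius_sq_rotate:
  "miquel_radius_sq p2 p3 p4 p1 v2 v3 v4 v1 R = miquel_radius_sq p1 p2 p3 p4 v1 v2 v3 v4 R"
proof -
  have sq: "(v3*v1 - v2*v4)\<^sup>2 = (v2*v4 - v1*v3)\<^sup>2"
    by (simp add: power2_eq_square algebra_simps)
  have K: "p3*p1*(v3*v1 - v2*v4) + p1*v3*v4*(v2 - v1) - p3*v2*v1*(v3 - v4)
      = - (p1*p3*(v2*v4 - v1*v3) + p3*v1*v2*(v3 - v4) + p1*v3*v4*(v1 - v2))"
    and M: "p2*p4*(v3*v1 - v2*v4) + p4*v2*v3*(v4 - v1) + p2*v4*v1*(v2 - v3)
      = - (p2*p4*(v2*v4 - v1*v3) + p4*v2*v3*(v1 - v4) - p2*v1*v4*(v2 - v3))"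
    by (simp_all add: algebra_simps)
  have swap: "\<And>A B X. R * (- A) * (- B) / X = R * B * A / (X::complex)"
    by (simp add: mult.commute mult.left_commute)
  have prod: "p2*p3*p4*p1 = p1*p2*p3*p4" by simp
  show ?thesis
    unfolding miquel_radius_sq_def sq K M prod by (rule swap)
qed

lemma miquel_center_dist_sq_algebraic:
  fixes p1 p2 p3 p4 v1 v2 v3 v4 q R :: complex
  assumes nz: "p1 \<noteq> 0" "p2 \<noteq> 0" "p3 \<noteq> 0" "p4 \<noteq> 0" "R \<noteq> 0"
    and cnj_p: "cnj p1 = R / p1" "cnj p2 = R / p2" "cnj p3 = R / p3" "cnj p4 = R / p4"
    and cnj_v: "cnj v1 = R * v1 / (p4 * p1)" "cnj v2 = R * v2 / (p1 * p2)"
      "cnj v3 = R * v3 / (p2 * p3)" "cnj v4 = R * v4 / (p3 * p4)"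
    and v12: "v1 \<noteq> v2" and den: "v2 * v4 - v1 * v3 \<noteq> 0"
    and q: "q = v1 + (v1 - v2) * (cnj p1 - cnj v1) / (cnj v1 - cnj v2)"
    and cnj_q: "cnj q = cnj p1 - (q - p1) * (cnj v1 - cnj v2) / (v1 - v2)"
  shows "(q - miquel_center v1 v2 v3 v4) * cnj (q - miquel_center v1 v2 v3 v4)
       = miquel_radius_sq p1 p2 p3 p4 v1 v2 v3 v4 R"
proof -
  define D where "D = v2 * p4 - v1 * p2"
  define dn where "dn = v2 * v4 - v1 * v3"
  define M where "M = p2*p4*(v2*v4 - v1*v3) + p4*v2*v3*(v1 - v4) - p2*v1*v4*(v2 - v3)"
  define K where "K = p1*p3*(v2*v4 - v1*v3) + p3*v1*v2*(v3 - v4) + p1*v3*v4*(v1 - v2)"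
  define c where "c = miquel_center v1 v2 v3 v4"
  have dv: "v2 - v1 \<noteq> 0" "v1 - v2 \<noteq> 0" using v12 by auto
  have dnz: "dn \<noteq> 0" using den by (simp add: dn_def)
  have cnj_v12: "cnj v1 - cnj v2 = - R * D / (p1 * p2 * p4)"
    using nz unfolding cnj_v D_def by (simp add: field_simps)
  moreover have "cnj v1 - cnj v2 \<noteq> 0" using v12 by simp
  ultimately have Dnz: "D \<noteq> 0" by auto
  have q_eq: "q = (v1*v2*(p4 - p2) + p2*p4*(v2 - v1)) / D"
    unfolding q cnj_v12 using nz Dnz unfolding cnj_p cnj_v D_def by (simp add: field_simps)
  have "cnj q = R / p1 - ((v1*v2*(p4 - p2) + p2*p4*(v2 - v1)) / D - p1) * (- R * D / (p1*p2*p4)) / (v1 - v2)"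
    using cnj_q cnj_v12 q_eq cnj_p(1) by simp
  also have "\<dots> = R * (v1*v2*(p2 - p4) + p1*D) / (p1*p2*p4*(v2 - v1))"
    using nz Dnz dv by (simp add: field_simps)
  finally have cnj_q_eq: "cnj q = R * (v1*v2*(p2 - p4) + p1*D) / (p1*p2*p4*(v2 - v1))" .
  have cnj_c: "cnj c = R * (- v1*v2*v3*p3*p4 + v1*v2*v4*p2*p3 - v1*v3*v4*p1*p2 + v2*v3*v4*p1*p4)
      / (p1*p2*p3*p4*dn)"
    using nz den unfolding c_def miquel_center_def dn_def by (simp add: cnj_v field_simps)
  have q_c: "q - c = (v2 - v1) * M / (D * dn)"
    unfolding q_eq c_def miquel_center_def dn_def[symmetric] using Dnz dnz
    by (simp add: field_simps) (simp add: D_def dn_def M_def algebra_simps)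
  have cnj_q_c: "cnj q - cnj c = R * D * K / (p1*p2*p3*p4*(v2 - v1)*dn)"
    unfolding cnj_q_eq cnj_c using Dnz dnz nz dv
    by (simp add: field_simps) (simp add: D_def dn_def K_def algebra_simps)
  have "(q - c) * cnj (q - c) = (q - c) * (cnj q - cnj c)" by simp
  also have "\<dots> = (v2 - v1) * M / (D * dn) * (R * D * K / (p1*p2*p3*p4*(v2 - v1)*dn))"
    by (simp only: q_c cnj_q_c)
  also have "\<dots> = R * M * K / (p1*p2*p3*p4*dn\<^sup>2)"
    using Dnz dnz nz dv by (simp add: field_simps power2_eq_square)
  finally show ?thesis unfolding c_def M_def K_def dn_def miquel_radius_sq_def .
qed

lemma miquel_center_dist_sq:
  fixes p1 p2 p3 p4 q v1 v2 v3 v4 :: complex and r r1 r2 r3 r4 :: real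
  assumes r: "r > 0"
    and on_C: "p1 \<in> circle 0 r" "p2 \<in> circle 0 r" "p3 \<in> circle 0 r" "p4 \<in> circle 0 r"
    and on_C1: "{p4, p1, q} \<subseteq> circle v1 r1" and on_C2: "{p1, p2, q} \<subseteq> circle v2 r2"
    and on_C3: "{p2, p3} \<subseteq> circle v3 r3" and on_C4: "{p3, p4} \<subseteq> circle v4 r4"
    and distinct: "q \<noteq> p1" "p4 \<noteq> p1" "p1 \<noteq> p2" "p2 \<noteq> p3" "p3 \<noteq> p4"
    and v12: "v1 \<noteq> v2" and den: "v2 * v4 - v1 * v3 \<noteq> 0"
  shows "(q - miquel_center v1 v2 v3 v4) * cnj (q - miquel_center v1 v2 v3 v4)
       = miquel_radius_sq p1 p2 p3 p4 v1 v2 v3 v4 (of_real r ^ 2)"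
proof -
  note p1 = cnj_on_centered_circle[OF on_C(1) r] and p2 = cnj_on_centered_circle[OF on_C(2) r]
    and p3 = cnj_on_centered_circle[OF on_C(3) r] and p4 = cnj_on_centered_circle[OF on_C(4) r]
  have v1: "cnj v1 = of_real r ^ 2 * v1 / (p4 * p1)"
    using on_C1 by (intro cnj_center_of_chord p4 p1 distinct) (simp add: circle_def)
  have v2: "cnj v2 = of_real r ^ 2 * v2 / (p1 * p2)"
    using on_C2 by (intro cnj_center_of_chord p1 p2 distinct) (simp add: circle_def)
  have v3: "cnj v3 = of_real r ^ 2 * v3 / (p2 * p3)"
    using on_C3 by (intro cnj_center_of_chord p2 p3 distinct) (simp add: circle_def)
  have v4: "cnj v4 = of_real r ^ 2 * v4 / (p3 * p4)"
    using on_C4 by (intro cnj_center_of_chord p3 p4 distinct) (simp add: circle_def)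
  have "cmod (q - v1) = cmod (p1 - v1)" "cmod (q - v2) = cmod (p1 - v2)"
    using on_C1 on_C2 by (simp_all add: circle_def)
  note q = second_intersection[OF this distinct(1) v12]
  show ?thesis
    using r by (intro miquel_center_dist_sq_algebraic p1 p2 p3 p4 v1 v2 v3 v4 v12 den q) simp
qed

lemma miquel_circle_centered:
  fixes p1 p2 p3 p4 q1 q2 q3 q4 v1 v2 v3 v4 :: complex and r r1 r2 r3 r4 :: real
  assumes r: "r > 0"
    and centers: "distinct [v1, v2, v3, v4]"
    and P1: "p1 \<in> circle 0 r \<inter> circle v1 r1 \<inter> circle v2 r2"
    and P2: "p2 \<in> circle 0 r \<inter> circle v2 r2 \<inter> circle v3 r3"
    and P3: "p3 \<in> circle 0 r \<inter> circle v3 r3 \<inter> circle v4 r4"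
    and P4: "p4 \<in> circle 0 r \<inter> circle v4 r4 \<inter> circle v1 r1"
    and Q1: "q1 \<in> circle v1 r1 \<inter> circle v2 r2"
    and Q2: "q2 \<in> circle v2 r2 \<inter> circle v3 r3"
    and Q3: "q3 \<in> circle v3 r3 \<inter> circle v4 r4"
    and Q4: "q4 \<in> circle v4 r4 \<inter> circle v1 r1"
    and general: "distinct [p1, p2, p3, p4, q1, q2, q3, q4]"
    and den: "v2 * v4 - v1 * v3 \<noteq> 0"
  shows "{q1, q2, q3, q4} \<subseteq> circle (miquel_center v1 v2 v3 v4) (cmod (q1 - miquel_center v1 v2 v3 v4))"
proof -
  define c where "c = miquel_center v1 v2 v3 v4"
  define F where "F = miquel_radius_sq p1 p2 p3 p4 v1 v2 v3 v4 (of_real r ^ 2)"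
  have c2: "miquel_center v2 v3 v4 v1 = c" and F2: "miquel_radius_sq p2 p3 p4 p1 v2 v3 v4 v1 (of_real r ^ 2) = F"
    unfolding c_def F_def by (rule miquel_center_rotate miquel_radius_sq_rotate)+
  have c3: "miquel_center v3 v4 v1 v2 = c" and F3: "miquel_radius_sq p3 p4 p1 p2 v3 v4 v1 v2 (of_real r ^ 2) = F"
    unfolding c2[symmetric] F2[symmetric] by (rule miquel_center_rotate miquel_radius_sq_rotate)+
  have c4: "miquel_center v4 v1 v2 v3 = c" and F4: "miquel_radius_sq p4 p1 p2 p3 v4 v1 v2 v3 (of_real r ^ 2) = F"
    unfolding c3[symmetric] F3[symmetric] by (rule miquel_center_rotate miquel_radius_sq_rotate)+
  have "(q1 - c) * cnj (q1 - c) = F"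
    unfolding c_def F_def using P1 P2 P3 P4 Q1 general centers
    by (intro miquel_center_dist_sq[OF r] den) auto
  moreover have "(q2 - c) * cnj (q2 - c) = F"
    unfolding c2[symmetric] F2[symmetric] using P1 P2 P3 P4 Q2 general centers den
    by (intro miquel_center_dist_sq[OF r]) (auto simp: algebra_simps)
  moreover have "(q3 - c) * cnj (q3 - c) = F"
    unfolding c3[symmetric] F3[symmetric] using P1 P2 P3 P4 Q3 general centers den
    by (intro miquel_center_dist_sq[OF r]) (auto simp: algebra_simps)
  moreover have "(q4 - c) * cnj (q4 - c) = F"
    unfolding c4[symmetric] F4[symmetric] using P1 P2 P3 P4 Q4 general centers den
    by (intro miquel_center_dist_sq[OF r]) (auto simp: algebra_simps)
  ultimately show ?thesis
    unfolding c_def[symmetric] by (auto simp: circle_def cmod_eq_iff_mult_cnj)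
qed

lemma cross_ratio_equation_roots:
  fixes u u1 u2 u3 u4 z :: complex
  defines "nm \<equiv> u*u1*u3 - u1*u2*u3 - u*u2*u4 + u1*u2*u4 - u1*u3*u4 + u2*u3*u4"
    and "dn \<equiv> u*u1 - u*u2 + u*u3 - u1*u3 - u*u4 + u2*u4"
  assumes "dn \<noteq> 0"
  shows "(u2 - z) * (u4 - z) * ((u1 - u) * (u3 - u)) = (u1 - z) * (u3 - z) * ((u2 - u) * (u4 - u))
     \<longleftrightarrow> z = u \<or> z = nm / dn"
proof -
  have "(u2 - z) * (u4 - z) * ((u1 - u) * (u3 - u)) - (u1 - z) * (u3 - z) * ((u2 - u) * (u4 - u))
      = - ((z - u) * (dn * z - nm))"
    unfolding dn_def nm_def by algebra
  then have "(u2 - z) * (u4 - z) * ((u1 - u) * (u3 - u)) = (u1 - z) * (u3 - z) * ((u2 - u) * (u4 - u))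
      \<longleftrightarrow> (z - u) * (dn * z - nm) = 0"
    by (subst eq_iff_diff_eq_0) (simp only: neg_equal_0_iff_equal)
  also have "\<dots> \<longleftrightarrow> z = u \<or> dn * z = nm" by simp
  also have "dn * z = nm \<longleftrightarrow> z = nm / dn" using assms(3) by (auto simp: eq_divide_eq mult.commute)
  finally show ?thesis .
qed

theorem mainTheorem10:
  fixes u u1 u2 u3 u4 P1 P2 P3 P4 Q1 Q2 Q3 Q4 :: complex
    and r r1 r2 r3 r4 :: real
  assumes radii: "r > 0" "r1 > 0" "r2 > 0" "r3 > 0" "r4 > 0"
    and centers: "distinct [u, u1, u2, u3, u4]"
    and P1: "P1 \<in> circle u r \<inter> circle u1 r1 \<inter> circle u2 r2"
    and P2: "P2 \<in> circle u r \<inter> circle u2 r2 \<inter> circle u3 r3"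
    and P3: "P3 \<in> circle u r \<inter> circle u3 r3 \<inter> circle u4 r4"
    and P4: "P4 \<in> circle u r \<inter> circle u4 r4 \<inter> circle u1 r1"
    and Q1: "Q1 \<in> circle u1 r1 \<inter> circle u2 r2"
    and Q2: "Q2 \<in> circle u2 r2 \<inter> circle u3 r3"
    and Q3: "Q3 \<in> circle u3 r3 \<inter> circle u4 r4"
    and Q4: "Q4 \<in> circle u4 r4 \<inter> circle u1 r1"
    and general: "distinct [P1, P2, P3, P4, Q1, Q2, Q3, Q4]"
    and denom: "u*u1 - u*u2 + u*u3 - u1*u3 - u*u4 + u2*u4 \<noteq> 0"
  shows "let ut = (u*u1*u3 - u1*u2*u3 - u*u2*u4 + u1*u2*u4 - u1*u3*u4 + u2*u3*u4) /
                   (u*u1 - u*u2 + u*u3 - u1*u3 - u*u4 + u2*u4)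
         in (\<exists>rt. {Q1, Q2, Q3, Q4} \<subseteq> circle ut rt)
          \<and> (\<forall>z. (u2 - z) * (u4 - z) * ((u1 - u) * (u3 - u))
                   = (u1 - z) * (u3 - z) * ((u2 - u) * (u4 - u))
                 \<longleftrightarrow> z = u \<or> z = ut)"
proof -
  define nm where "nm = u*u1*u3 - u1*u2*u3 - u*u2*u4 + u1*u2*u4 - u1*u3*u4 + u2*u3*u4"
  define dn where "dn = u*u1 - u*u2 + u*u3 - u1*u3 - u*u4 + u2*u4"
  define c where "c = miquel_center (u1 - u) (u2 - u) (u3 - u) (u4 - u)"
  have dn: "(u2 - u) * (u4 - u) - (u1 - u) * (u3 - u) = dn"
    unfolding dn_def by (simp add: algebra_simps)
  have "- (u1-u)*(u2-u)*(u3-u) + (u1-u)*(u2-u)*(u4-u) - (u1-u)*(u3-u)*(u4-u) + (u2-u)*(u3-u)*(u4-u)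
      = nm - u * dn"
    unfolding nm_def dn_def by (simp add: algebra_simps)
  then have "c = nm / dn - u"
    using denom unfolding c_def miquel_center_def dn dn_def[symmetric] by (simp add: diff_divide_distrib)
  moreover have "{Q1 - u, Q2 - u, Q3 - u, Q4 - u} \<subseteq> circle c (cmod (Q1 - u - c))"
    unfolding c_def using radii(1) centers P1 P2 P3 P4 Q1 Q2 Q3 Q4 general denom
    by (intro miquel_circle_centered[where ?p1.0 = "P1 - u" and ?p2.0 = "P2 - u" and ?p3.0 = "P3 - u" and ?p4.0 = "P4 - u"])
      (auto simp: circle_translate circle_translate_to_origin dn dn_def[symmetric])
  ultimately have "{Q1, Q2, Q3, Q4} \<subseteq> circle (nm / dn) (cmod (Q1 - nm / dn))"
    by (simp add: circle_def algebra_simps)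
  then show ?thesis
    unfolding Let_def nm_def dn_def using cross_ratio_equation_roots[OF denom] by blast
qed

end
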